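(* Let $\mathbb{K}\in\{\mathbb{R},\mathbb{C}\}$ and $\mathcal{A}=(A_1,\ldots,A_d)$ positive semidefinite matrices in $\mathbb{K}^{n\times n}$ (symmetric/Hermitian) that pairwise commute. Then $\mathrm{Opt}(\mathcal{A})=\mathrm{OptSDP}(\mathcal{A})$.
   Context: $\langle x,y\rangle=x^\dagger y$ with $\dagger$ the (conjugate) transpose, $\langle A,X\rangle=\operatorname{Tr}(A^\dagger X)$. $\mathrm{Opt}(\mathcal{A})=\max_{x\in\mathbb{K}^n,\ \|x\|=1}\big(\prod_{i=1}^d\langle x,A_ix\rangle\big)^{1/d}$; $\mathrm{OptSDP}(\mathcal{A})=\max\big\{\big(\prod_{i=1}^d\langle A_i,X\rangle\big)^{1/d}: X\text{ symmetric/Hermitian},\ X\succeq0,\ \operatorname{Tr}X=1\big\}$. *)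

theory Defs
  imports "HOL-Analysis.Analysis"
begin

definition rinner :: "real^'n \<Rightarrow> real^'n \<Rightarrow> real" where
  "rinner x y = (\<Sum>i\<in>UNIV. x$i * y$i)"

definition rsym :: "real^'n^'n \<Rightarrow> bool" where
  "rsym A \<longleftrightarrow> transpose A = A"

definition rpsd :: "real^'n^'n \<Rightarrow> bool" where
  "rpsd A \<longleftrightarrow> rsym A \<and> (\<forall>x. rinner x (A *v x) \<ge> 0)"

definition rtrace :: "real^'n^'n \<Rightarrow> real" where
  "rtrace X = (\<Sum>i\<in>UNIV. X$i$i)"

definition rmat_inner :: "real^'n^'n \<Rightarrow> real^'n^'n \<Rightarrow> real" where
  "rmat_inner A X = rtrace (transpose A ** X)"

definition Opt_r :: "nat \<Rightarrow> (nat \<Rightarrow> real^'n^'n) \<Rightarrow> real" where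
  "Opt_r d A = Sup {root d (\<Prod>i<d. rinner x (A i *v x)) | x. norm x = 1}"

definition OptSDP_r :: "nat \<Rightarrow> (nat \<Rightarrow> real^'n^'n) \<Rightarrow> real" where
  "OptSDP_r d A = Sup {root d (\<Prod>i<d. rmat_inner (A i) X) | X.
      rsym X \<and> rpsd X \<and> rtrace X = 1}"

definition cinner_vec :: "complex^'n \<Rightarrow> complex^'n \<Rightarrow> complex" where
  "cinner_vec x y = (\<Sum>i\<in>UNIV. cnj (x$i) * y$i)"

definition cadj :: "complex^'n^'n \<Rightarrow> complex^'n^'n" where
  "cadj A = (\<chi> i j. cnj (A$j$i))"

definition cherm :: "complex^'n^'n \<Rightarrow> bool" where
  "cherm A \<longleftrightarrow> cadj A = A"

text \<open>For Hermitian A the value x^* A x is real; PSD means it is nonnegative.\<close>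
definition cpsd :: "complex^'n^'n \<Rightarrow> bool" where
  "cpsd A \<longleftrightarrow> cherm A \<and> (\<forall>x. Im (cinner_vec x (A *v x)) = 0 \<and> Re (cinner_vec x (A *v x)) \<ge> 0)"

definition ctrace :: "complex^'n^'n \<Rightarrow> complex" where
  "ctrace X = (\<Sum>i\<in>UNIV. X$i$i)"

definition cmat_inner :: "complex^'n^'n \<Rightarrow> complex^'n^'n \<Rightarrow> complex" where
  "cmat_inner A X = ctrace (cadj A ** X)"

text \<open>For Hermitian arguments the quantities below are real; we take real parts.\<close>
definition Opt_c :: "nat \<Rightarrow> (nat \<Rightarrow> complex^'n^'n) \<Rightarrow> real" where
  "Opt_c d A = Sup {root d (\<Prod>i<d. Re (cinner_vec x (A i *v x))) | x. norm x = 1}"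

definition OptSDP_c :: "nat \<Rightarrow> (nat \<Rightarrow> complex^'n^'n) \<Rightarrow> real" where
  "OptSDP_c d A = Sup {root d (\<Prod>i<d. Re (cmat_inner (A i) X)) | X.
      cherm X \<and> cpsd X \<and> ctrace X = 1}"

end

theory Submission
  imports Defs
begin

text \<open>Commuting Hermitian matrices \<open>A\<^sub>1, \<dots>, A\<^sub>d\<close> have a common orthonormal eigenbasis.
  For a feasible \<open>X\<close> of the relaxation, the diagonal entries of \<open>X\<close> in that basis are
  nonnegative weights summing to one, and \<open>\<langle>A\<^sub>i, X\<rangle>\<close> only depends on them; the unit vector
  whose squared coordinates are these weights therefore has \<open>\<langle>x, A\<^sub>i x\<rangle> = \<langle>A\<^sub>i, X\<rangle>\<close> for all
  \<open>i\<close>. Conversely every unit vector \<open>x\<close> gives the feasible \<open>X = x x\<^sup>\<dagger>\<close>. So both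
  problems maximise the same objective over the same set of values of
  \<open>(\<langle>A\<^sub>i, X\<rangle>)\<^sub>i\<close>.\<close>

section \<open>Real and complex scalars\<close>

text \<open>The scalar fields \<open>\<real>\<close> and \<open>\<complex>\<close> are handled uniformly: \<open>inner 1 a\<close> is the real
  part of \<open>a\<close>, and the conjugation is tied to the real inner product of the field.\<close>

class rclike = real_normed_field + euclidean_space +
  fixes conjugate :: "'a \<Rightarrow> 'a"
  assumes conjugate_conjugate [simp]: "conjugate (conjugate a) = a"
    and conjugate_add [simp]: "conjugate (a + b) = conjugate a + conjugate b"
    and conjugate_mult [simp]: "conjugate (a * b) = conjugate a * conjugate b"
    and inner_conjugate: "inner a b = inner 1 (conjugate a * b)"
    and add_conjugate: "a + conjugate a = (2 * inner 1 a) *\<^sub>R 1"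

instantiation real :: rclike
begin
definition conjugate_real_def [simp]: "conjugate (x::real) = x"
instance by standard (auto simp: inner_real_def)
end

instantiation complex :: rclike
begin
definition conjugate_complex_def [simp]: "conjugate (z::complex) = cnj z"
instance by standard (auto simp: inner_complex_def complex_eq_iff)
end

definition re :: "'a::rclike \<Rightarrow> real" where
  "re a = inner 1 a"

lemma re_real [simp]: "re (x::real) = x"
  by (simp add: re_def)

lemma re_complex [simp]: "re (z::complex) = Re z"
  by (simp add: re_def inner_complex_def)

lemma re_of_real [simp]: "re (of_real r :: 'a::rclike) = r"
  by (simp add: re_def of_real_def dot_square_norm)

lemma re_zero [simp]: "re 0 = 0"
  by (simp add: re_def)

lemma re_sum: "re (sum f A) = (\<Sum>x\<in>A. re (f x))"
  by (simp add: re_def inner_sum_right)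

lemma add_conjugate_eq_re: "a + conjugate a = of_real (2 * re (a::'a::rclike))"
  by (simp add: add_conjugate re_def scaleR_conv_of_real)

lemma conjugate_of_real [simp]: "conjugate (of_real r :: 'a::rclike) = of_real r"
  using add_conjugate_eq_re[of "of_real r :: 'a"] by (simp flip: of_real_add)

lemma conjugate_zero [simp]: "conjugate (0::'a::rclike) = 0"
  using conjugate_of_real[of 0] by simp

lemma conjugate_sum: "conjugate (sum f A :: 'a::rclike) = (\<Sum>x\<in>A. conjugate (f x))"
  by (induction A rule: infinite_finite_induct) auto

lemma conjugate_eq_self_imp_real:
  assumes "conjugate a = a"
  shows "a = of_real (re (a::'a::rclike))"
proof -
  have "a + a = of_real (re a) + of_real (re a)"
    using assms add_conjugate_eq_re[of a] by (simp flip: of_real_add)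
  thus ?thesis by simp
qed

lemma inner_eq_re: "inner a b = re (conjugate a * (b::'a::rclike))"
  unfolding re_def by (rule inner_conjugate)

lemma conjugate_mult_self: "conjugate a * a = of_real ((norm (a::'a::rclike))\<^sup>2)"
proof -
  have "conjugate (conjugate a * a) = conjugate a * a"
    by (simp add: mult.commute)
  hence "conjugate a * a = of_real (re (conjugate a * a))"
    by (rule conjugate_eq_self_imp_real)
  thus ?thesis by (simp flip: inner_eq_re add: power2_norm_eq_inner)
qed

section \<open>Vectors and matrices over \<open>\<real>\<close> or \<open>\<complex>\<close>\<close>

definition hinner :: "'a::rclike^'n \<Rightarrow> 'a^'n \<Rightarrow> 'a" where
  "hinner x y = (\<Sum>i\<in>UNIV. conjugate (x$i) * y$i)"

definition mat_adjoint :: "'a::rclike^'n^'m \<Rightarrow> 'a^'m^'n" where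
  "mat_adjoint A = (\<chi> i j. conjugate (A$j$i))"

definition hermitian :: "'a::rclike^'n^'n \<Rightarrow> bool" where
  "hermitian A \<longleftrightarrow> mat_adjoint A = A"

definition psd :: "'a::rclike^'n^'n \<Rightarrow> bool" where
  "psd A \<longleftrightarrow> hermitian A \<and> (\<forall>x. 0 \<le> re (hinner x (A *v x)))"

lemma hinner_zero_right [simp]: "hinner x 0 = 0"
  by (simp add: hinner_def)

lemma hinner_zero_left [simp]: "hinner 0 y = 0"
  by (simp add: hinner_def)

lemma hinner_add_right: "hinner x (y + z) = hinner x y + hinner x z"
  by (simp add: hinner_def distrib_left sum.distrib)

lemma hinner_diff_right: "hinner x (y - z) = hinner x y - hinner x z"
  by (simp add: hinner_def right_diff_distrib sum_subtractf)

lemma hinner_scale_right: "hinner x (c *s y) = c * hinner x y"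
  by (simp add: hinner_def sum_distrib_left algebra_simps)

lemma hinner_scale_left: "hinner (c *s x) y = conjugate c * hinner x y"
  by (simp add: hinner_def sum_distrib_left algebra_simps)

lemma scaleR_eq_scale_of_real: "r *\<^sub>R x = of_real r *s (x::'a::rclike^'n)"
  by (simp only: vec_eq_iff vector_scaleR_component vector_smult_component)
    (simp add: scaleR_conv_of_real)

lemma hinner_scaleR_right: "hinner x (r *\<^sub>R y) = of_real r * hinner x y"
  by (simp add: scaleR_eq_scale_of_real hinner_scale_right)

lemma hinner_scaleR_left: "hinner (r *\<^sub>R x) y = of_real r * hinner x y"
  by (simp add: scaleR_eq_scale_of_real hinner_scale_left)

lemma hinner_sum_right: "hinner x (sum f S) = (\<Sum>s\<in>S. hinner x (f s))"
  by (induction S rule: infinite_finite_induct) (auto simp: hinner_add_right)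

lemma hinner_sum_left: "hinner (sum f S) y = (\<Sum>s\<in>S. hinner (f s) y)"
  by (induction S rule: infinite_finite_induct) (auto simp: hinner_def distrib_right sum.distrib)

lemma conjugate_hinner: "conjugate (hinner x y) = hinner y x"
  by (simp add: hinner_def conjugate_sum mult.commute)

lemma inner_eq_re_hinner: "inner x y = re (hinner x y)"
  by (simp add: inner_vec_def hinner_def re_sum inner_eq_re)

lemma hinner_self: "hinner x x = of_real ((norm x)\<^sup>2)"
proof -
  have "hinner x x = of_real (re (hinner x x))"
    by (rule conjugate_eq_self_imp_real) (simp add: conjugate_hinner)
  thus ?thesis by (simp flip: inner_eq_re_hinner add: power2_norm_eq_inner)
qed

lemma hermitian_hinner_swap:
  assumes "hermitian A"
  shows "hinner x (A *v y) = hinner (A *v x) y"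
proof -
  have entry: "conjugate (A$j$i) = A$i$j" for i j
    using assms unfolding hermitian_def mat_adjoint_def by (metis vec_lambda_beta)
  have "hinner x (A *v y) = (\<Sum>i\<in>UNIV. \<Sum>j\<in>UNIV. conjugate (x$i) * A$i$j * y$j)"
    by (simp add: hinner_def matrix_vector_mult_def sum_distrib_left mult.assoc)
  also have "\<dots> = (\<Sum>j\<in>UNIV. \<Sum>i\<in>UNIV. conjugate (x$i) * A$i$j * y$j)"
    by (rule sum.swap)
  also have "\<dots> = hinner (A *v x) y"
    by (simp add: hinner_def matrix_vector_mult_def conjugate_sum sum_distrib_left
        sum_distrib_right entry algebra_simps)
  finally show ?thesis .
qed

lemma hermitian_inner_swap: "hermitian A \<Longrightarrow> inner (A *v x) y = inner x (A *v y)"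
  by (simp add: inner_eq_re_hinner hermitian_hinner_swap)

lemma hermitian_quadratic_form_real:
  "hermitian A \<Longrightarrow> conjugate (hinner x (A *v x)) = hinner x (A *v x)"
  by (simp add: conjugate_hinner hermitian_hinner_swap)

section \<open>Eigenvectors of self-adjoint maps\<close>

lemma linear_coeff_zero_if_quadratic_nonpos:
  fixes a b :: real
  assumes "\<And>t. a * t + b * t\<^sup>2 \<le> 0"
  shows "a = 0"
proof (rule ccontr)
  assume "a \<noteq> 0"
  define c where "c = \<bar>b\<bar> + 1"
  have c: "c > 0" "c + b \<ge> 1"
    unfolding c_def by auto
  have "a * (a / c) + b * (a / c)\<^sup>2 = a\<^sup>2 * (c + b) / c\<^sup>2"
    using c by (simp add: field_simps power2_eq_square)
  also have "\<dots> > 0"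
    using \<open>a \<noteq> 0\<close> c by (intro divide_pos_pos mult_pos_pos) auto
  finally show False
    using assms[of "a / c"] by linarith
qed

lemma rayleigh_quotient_attains_max:
  fixes T :: "'v::euclidean_space \<Rightarrow> 'v"
  assumes "linear T" "subspace S" "v \<in> S" "v \<noteq> 0"
  obtains u where "u \<in> S" "norm u = 1"
    "\<And>x. x \<in> S \<Longrightarrow> inner x (T x) \<le> inner u (T u) * (norm x)\<^sup>2"
proof -
  define K where "K = S \<inter> sphere 0 1"
  define f where "f x = inner x (T x)" for x
  have "compact K"
    unfolding K_def using assms(2) by (intro closed_Int_compact closed_subspace compact_sphere)
  moreover have "v /\<^sub>R norm v \<in> K"
    using assms(2-4) by (simp add: K_def subspace_scale)
  moreover have "continuous_on K f"
    unfolding f_def using assms(1)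
    by (intro continuous_on_inner continuous_on_id linear_continuous_on)
      (simp add: linear_conv_bounded_linear)
  ultimately obtain u where u: "u \<in> K" and umax: "\<And>y. y \<in> K \<Longrightarrow> f y \<le> f u"
    using continuous_attains_sup[of K f] by blast
  have f_scale: "f (c *\<^sub>R x) = c\<^sup>2 * f x" for c x
    by (simp add: f_def linear_scale[OF assms(1)] power2_eq_square)
  have "f x \<le> f u * (norm x)\<^sup>2" if "x \<in> S" for x
  proof (cases "x = 0")
    case True
    thus ?thesis by (simp add: f_def linear_0[OF assms(1)])
  next
    case False
    have "x /\<^sub>R norm x \<in> K"
      using that False assms(2) by (simp add: K_def subspace_scale)
    hence "f x / (norm x)\<^sup>2 \<le> f u"
      using umax[OF \<open>x /\<^sub>R norm x \<in> K\<close>] f_scale[of "inverse (norm x)" x]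
      by (simp add: power_inverse divide_inverse mult.commute)
    thus ?thesis
      using False by (simp add: divide_le_eq mult.commute)
  qed
  with u show ?thesis
    using that by (auto simp: K_def f_def)
qed

text \<open>First-order optimality: with \<open>l = \<langle>u, T u\<rangle>\<close>, the defect \<open>\<langle>x, T x\<rangle> - l \<parallel>x\<parallel>\<^sup>2\<close> is
  nonpositive on \<open>S\<close>; along \<open>u + t w\<close> it is a quadratic in \<open>t\<close> without constant term, so
  its linear coefficient \<open>2 \<langle>w, T u - l u\<rangle>\<close> vanishes. Taking \<open>w = T u - l u\<close> gives the
  claim.\<close>

lemma rayleigh_maximiser_is_eigenvector:
  fixes T :: "'v::euclidean_space \<Rightarrow> 'v"
  assumes T: "linear T" "\<And>x y. inner (T x) y = inner x (T y)"
    and S: "subspace S" "\<And>x. x \<in> S \<Longrightarrow> T x \<in> S"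
    and u: "u \<in> S" "norm u = 1"
    and umax: "\<And>x. x \<in> S \<Longrightarrow> inner x (T x) \<le> inner u (T u) * (norm x)\<^sup>2"
  shows "T u = inner u (T u) *\<^sub>R u"
proof -
  define l where "l = inner u (T u)"
  have uu: "inner u u = 1"
    using u(2) by (simp flip: power2_norm_eq_inner)
  have orth: "inner w (T u) - l * inner u w = 0" if "w \<in> S" for w
  proof -
    have "2 * (inner w (T u) - l * inner u w) * t + (inner w (T w) - l * (norm w)\<^sup>2) * t\<^sup>2 \<le> 0"
      for t
    proof -
      have "u + t *\<^sub>R w \<in> S"
        using u(1) that S(1) by (simp add: subspace_add subspace_scale)
      moreover have "inner (u + t *\<^sub>R w) (T (u + t *\<^sub>R w))
          = l + 2 * t * inner w (T u) + t\<^sup>2 * inner w (T w)"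
        using T(2)[of u w] unfolding l_def
        by (simp add: linear_add[OF T(1)] linear_scale[OF T(1)] inner_add_left
            inner_add_right power2_eq_square algebra_simps inner_commute)
      moreover have "(norm (u + t *\<^sub>R w))\<^sup>2 = 1 + 2 * t * inner u w + t\<^sup>2 * (norm w)\<^sup>2"
        using uu unfolding power2_norm_eq_inner
        by (simp add: inner_add_left inner_add_right inner_commute power2_eq_square algebra_simps)
      ultimately show ?thesis
        using umax[of "u + t *\<^sub>R w"] unfolding l_def by (simp add: algebra_simps)
    qed
    hence "2 * (inner w (T u) - l * inner u w) = 0"
      by (intro linear_coeff_zero_if_quadratic_nonpos[of _ "inner w (T w) - l * (norm w)\<^sup>2"])
        (simp add: mult.assoc)
    thus ?thesis by simp
  qed
  define w where "w = T u - l *\<^sub>R u"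
  have "w \<in> S"
    unfolding w_def using u(1) S by (simp add: subspace_diff subspace_scale)
  moreover have "inner w (T u) - l * inner u w = inner w w"
    by (simp add: w_def inner_diff_left inner_diff_right inner_commute algebra_simps)
  ultimately have "w = 0"
    using orth by simp
  thus ?thesis
    by (simp add: w_def l_def)
qed

lemma self_adjoint_eigenvector_in_invariant_subspace:
  fixes T :: "'v::euclidean_space \<Rightarrow> 'v"
  assumes "linear T" "\<And>x y. inner (T x) y = inner x (T y)"
    and "subspace S" "\<And>x. x \<in> S \<Longrightarrow> T x \<in> S"
    and "v \<in> S" "v \<noteq> 0"
  obtains u where "u \<in> S" "norm u = 1" "T u = inner u (T u) *\<^sub>R u"
  using rayleigh_quotient_attains_max[OF assms(1,3,5,6)]
    rayleigh_maximiser_is_eigenvector[OF assms(1-4)] by metis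

section \<open>Common eigenvectors of commuting Hermitian matrices\<close>

lemma matrix_vector_scaleR_commute:
  "A *v (c *\<^sub>R x) = c *\<^sub>R (A *v (x::'a::real_algebra_1^'n))"
  by (rule linear_scale[OF matrix_vector_mul_linear])

lemma subspace_common_eigenspace:
  assumes "subspace S"
  shows "subspace {x \<in> S. \<forall>i\<in>I. A i *v x = \<mu> i *\<^sub>R (x::'a::real_algebra_1^'n)}"
  using assms
  by (intro subspaceI)
    (auto simp: subspace_0 subspace_add subspace_scale matrix_vector_right_distrib
      matrix_vector_scaleR_commute scaleR_add_right)

lemma common_eigenspace_invariant:
  fixes A :: "nat \<Rightarrow> 'a::{real_algebra_1,comm_ring_1}^'n^'n"
  assumes "\<forall>i\<in>I. A i ** A k = A k ** A i"
    and "\<And>x. x \<in> S \<Longrightarrow> A k *v x \<in> S"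
    and "x \<in> {x \<in> S. \<forall>i\<in>I. A i *v x = \<mu> i *\<^sub>R x}"
  shows "A k *v x \<in> {x \<in> S. \<forall>i\<in>I. A i *v x = \<mu> i *\<^sub>R x}"
proof -
  have "A i *v (A k *v x) = \<mu> i *\<^sub>R (A k *v x)" if "i \<in> I" for i
  proof -
    have "A i *v (A k *v x) = A k *v (A i *v x)"
      using assms(1) that by (simp add: matrix_vector_mul_assoc)
    also have "\<dots> = \<mu> i *\<^sub>R (A k *v x)"
      using assms(3) that by (simp add: matrix_vector_scaleR_commute)
    finally show ?thesis .
  qed
  thus ?thesis
    using assms(2,3) by simp
qed

text \<open>Induction on the number of matrices: the common eigenspace of the first \<open>k\<close> ones
  inside \<open>S\<close> is invariant under the \<open>k\<close>-th, which therefore has an eigenvector in it.\<close>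

lemma common_eigenvector_of_first_matrices:
  fixes A :: "nat \<Rightarrow> 'a::rclike^'n^'n"
  assumes herm: "\<forall>i<d. hermitian (A i)"
    and comm: "\<forall>i<d. \<forall>j<d. A i ** A j = A j ** A i"
    and S: "subspace S" "\<And>i x. i < d \<Longrightarrow> x \<in> S \<Longrightarrow> A i *v x \<in> S"
    and v: "v \<in> S" "v \<noteq> 0"
    and "k \<le> d"
  shows "\<exists>\<mu> w. w \<in> S \<and> w \<noteq> 0 \<and> (\<forall>i<k. A i *v w = \<mu> i *\<^sub>R w)"
  using \<open>k \<le> d\<close>
proof (induction k)
  case 0
  thus ?case using v by blast
next
  case (Suc k)
  then obtain \<mu> w where w: "w \<in> S" "w \<noteq> 0" "\<forall>i<k. A i *v w = \<mu> i *\<^sub>R w"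
    by auto
  define E where "E = {x \<in> S. \<forall>i\<in>{..<k}. A i *v x = \<mu> i *\<^sub>R x}"
  have "k < d"
    using Suc.prems by simp
  have "subspace E"
    unfolding E_def using S(1) by (rule subspace_common_eigenspace)
  moreover have "A k *v x \<in> E" if "x \<in> E" for x
    unfolding E_def using comm \<open>k < d\<close> S(2)[OF \<open>k < d\<close>] that[unfolded E_def]
    by (intro common_eigenspace_invariant) auto
  moreover have "w \<in> E"
    using w by (simp add: E_def)
  ultimately obtain u where u: "u \<in> E" "norm u = 1" "A k *v u = inner u (A k *v u) *\<^sub>R u"
    using self_adjoint_eigenvector_in_invariant_subspace[OF matrix_vector_mul_linear
        hermitian_inner_swap] herm \<open>k < d\<close> w(2) by metis
  show ?case
  proof (intro exI conjI)
    show "u \<in> S" "u \<noteq> 0"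
      using u by (auto simp: E_def)
    show "\<forall>i<Suc k. A i *v u = (\<mu>(k := inner u (A k *v u))) i *\<^sub>R u"
      using u by (auto simp: E_def less_Suc_eq)
  qed
qed

lemma common_eigenvector_in_invariant_subspace:
  fixes A :: "nat \<Rightarrow> 'a::rclike^'n^'n"
  assumes "\<forall>i<d. hermitian (A i)"
    and "\<forall>i<d. \<forall>j<d. A i ** A j = A j ** A i"
    and S: "subspace S" "\<And>i x. i < d \<Longrightarrow> x \<in> S \<Longrightarrow> A i *v x \<in> S"
    and "v \<in> S" "v \<noteq> 0"
  obtains u where "u \<in> S" "norm u = 1" "\<forall>i<d. A i *v u = inner u (A i *v u) *\<^sub>R u"
proof -
  obtain \<mu> w where w: "w \<in> S" "w \<noteq> 0" "\<forall>i<d. A i *v w = \<mu> i *\<^sub>R w"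
    using common_eigenvector_of_first_matrices[OF assms order.refl] by blast
  define u where "u = (1 / norm w) *\<^sub>R w"
  have "u \<in> S" "norm u = 1"
    unfolding u_def using S(1) w by (simp_all add: subspace_scale)
  moreover have "A i *v u = \<mu> i *\<^sub>R u" if "i < d" for i
    unfolding u_def using w that by (simp add: matrix_vector_scaleR_commute)
  moreover from this have "inner u (A i *v u) = \<mu> i" if "i < d" for i
    using \<open>norm u = 1\<close> that by (simp flip: power2_norm_eq_inner)
  ultimately show ?thesis
    using that by auto
qed

definition hinner_orthonormal :: "('a::rclike^'n) set \<Rightarrow> bool" where
  "hinner_orthonormal B \<longleftrightarrow> (\<forall>u\<in>B. \<forall>v\<in>B. hinner u v = (if u = v then 1 else 0))"

definition common_eigenbasis :: "nat \<Rightarrow> (nat \<Rightarrow> 'a::rclike^'n^'n) \<Rightarrow> ('a^'n) set \<Rightarrow> bool" where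
  "common_eigenbasis d A B \<longleftrightarrow> hinner_orthonormal B
     \<and> (\<forall>u\<in>B. \<forall>i<d. A i *v u = inner u (A i *v u) *\<^sub>R u)"

lemma hinner_orthonormal_card_le:
  assumes "hinner_orthonormal (B :: ('a::rclike^'n) set)"
  shows "finite B" "card B \<le> DIM('a^'n)"
proof -
  have "pairwise orthogonal B"
    using assms by (auto simp: hinner_orthonormal_def pairwise_def orthogonal_def
        inner_eq_re_hinner)
  moreover have "0 \<notin> B"
    using assms by (metis hinner_orthonormal_def hinner_zero_left zero_neq_one)
  ultimately have "independent B"
    by (rule pairwise_orthogonal_independent)
  from independent_bound[OF this] show "finite B" "card B \<le> DIM('a^'n)"
    by blast+
qed

lemma hinner_orthonormal_sum_left:
  assumes "finite B" "hinner_orthonormal B" "v \<in> B"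
  shows "hinner (\<Sum>u\<in>B. a u *s u) v = conjugate (a v)"
proof -
  have "hinner (\<Sum>u\<in>B. a u *s u) v = (\<Sum>u\<in>B. conjugate (a u) * hinner u v)"
    by (simp add: hinner_sum_left hinner_scale_left)
  also have "\<dots> = (\<Sum>u\<in>B. if u = v then conjugate (a v) else 0)"
    using assms(2,3) by (intro sum.cong refl) (auto simp: hinner_orthonormal_def)
  finally show ?thesis
    using assms(1,3) by simp
qed

lemma hinner_orthonormal_expansion:
  assumes "finite B" "hinner_orthonormal B"
  shows "hinner (\<Sum>u\<in>B. a u *s u) (\<Sum>v\<in>B. b v *s v) = (\<Sum>u\<in>B. conjugate (a u) * b u)"
  using hinner_orthonormal_sum_left[OF assms]
  by (simp add: hinner_sum_right hinner_scale_right mult.commute)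

lemma hinner_orthonormal_residual:
  assumes "finite B" "hinner_orthonormal B" "v \<in> B"
  shows "hinner v (x - (\<Sum>u\<in>B. hinner u x *s u)) = 0"
proof -
  have "hinner v (\<Sum>u\<in>B. hinner u x *s u) = conjugate (hinner (\<Sum>u\<in>B. hinner u x *s u) v)"
    by (simp add: conjugate_hinner)
  also have "\<dots> = hinner v x"
    by (simp add: hinner_orthonormal_sum_left[OF assms])
  finally show ?thesis
    by (simp add: hinner_diff_right)
qed

lemma hermitian_preserves_orthogonality_to_eigenvector:
  assumes "hermitian A" "A *v u = l *\<^sub>R u" "hinner u z = 0"
  shows "hinner u (A *v z) = 0"
  using assms by (simp add: hermitian_hinner_swap hinner_scaleR_left)

lemma common_eigenbasis_insert:
  fixes A :: "nat \<Rightarrow> 'a::rclike^'n^'n"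
  assumes herm: "\<forall>i<d. hermitian (A i)"
    and comm: "\<forall>i<d. \<forall>j<d. A i ** A j = A j ** A i"
    and B: "common_eigenbasis d A B"
    and y: "y \<noteq> 0" "\<forall>u\<in>B. hinner u y = 0"
  obtains u where "u \<notin> B" "common_eigenbasis d A (insert u B)"
proof -
  define S where "S = {z. \<forall>u\<in>B. hinner u z = 0}"
  have orth: "\<And>u v. u \<in> B \<Longrightarrow> v \<in> B \<Longrightarrow> hinner u v = (if u = v then 1 else 0)"
    and eig: "\<And>u i. u \<in> B \<Longrightarrow> i < d \<Longrightarrow> A i *v u = inner u (A i *v u) *\<^sub>R u"
    using B by (auto simp: common_eigenbasis_def hinner_orthonormal_def)
  have "subspace S"
    unfolding S_def by (rule subspaceI) (simp_all add: hinner_add_right hinner_scaleR_right)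
  moreover have "A i *v z \<in> S" if "i < d" "z \<in> S" for i z
    using herm eig that unfolding S_def
    by (blast intro: hermitian_preserves_orthogonality_to_eigenvector)
  moreover have "y \<in> S"
    using y(2) by (simp add: S_def)
  ultimately obtain u where u: "u \<in> S" "norm u = 1" "\<forall>i<d. A i *v u = inner u (A i *v u) *\<^sub>R u"
    using y(1) by (rule common_eigenvector_in_invariant_subspace[OF herm comm])
  have uu: "hinner u u = 1"
    using u(2) by (simp add: hinner_self)
  have "u \<notin> B"
    using u(1) uu by (auto simp: S_def)
  moreover have "hinner v u = 0" "hinner u v = 0" if "v \<in> B" for v
    using u(1) that conjugate_hinner[of v u] by (auto simp: S_def)
  ultimately have "common_eigenbasis d A (insert u B)"
    using orth eig uu u(3) by (auto simp: common_eigenbasis_def hinner_orthonormal_def)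
  with \<open>u \<notin> B\<close> show ?thesis
    using that by blast
qed

text \<open>A common eigenbasis of maximal size spans: the component of any vector orthogonal to
  it would extend it.\<close>

lemma common_eigenbasis_exists:
  fixes A :: "nat \<Rightarrow> 'a::rclike^'n^'n"
  assumes herm: "\<forall>i<d. hermitian (A i)"
    and comm: "\<forall>i<d. \<forall>j<d. A i ** A j = A j ** A i"
  obtains B where "finite B" "common_eigenbasis d A B" "\<And>x. x = (\<Sum>u\<in>B. hinner u x *s u)"
proof -
  have "common_eigenbasis d A {}"
    by (simp add: common_eigenbasis_def hinner_orthonormal_def)
  moreover have "\<forall>B. common_eigenbasis d A B \<longrightarrow> card B < Suc DIM('a^'n)"
    using hinner_orthonormal_card_le(2) by (auto simp: common_eigenbasis_def less_Suc_eq_le)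
  ultimately obtain B where B: "common_eigenbasis d A B"
    and max: "\<And>B'. common_eigenbasis d A B' \<Longrightarrow> card B' \<le> card B"
    using ex_has_greatest_nat[of "common_eigenbasis d A" "{}" card] by blast
  have "finite B"
    using B hinner_orthonormal_card_le(1) by (auto simp: common_eigenbasis_def)
  have "x = (\<Sum>u\<in>B. hinner u x *s u)" for x
  proof (rule ccontr)
    assume "x \<noteq> (\<Sum>u\<in>B. hinner u x *s u)"
    hence "x - (\<Sum>u\<in>B. hinner u x *s u) \<noteq> 0"
      by simp
    moreover have "\<forall>v\<in>B. hinner v (x - (\<Sum>u\<in>B. hinner u x *s u)) = 0"
      using B \<open>finite B\<close> by (auto simp: common_eigenbasis_def hinner_orthonormal_residual)
    ultimately obtain u where "u \<notin> B" "common_eigenbasis d A (insert u B)"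
      by (rule common_eigenbasis_insert[OF herm comm B])
    thus False
      using max[of "insert u B"] \<open>finite B\<close> by simp
  qed
  with \<open>finite B\<close> B show ?thesis
    using that by blast
qed

section \<open>Density matrices and unit vectors\<close>

lemma trace_eq_sum_hinner_basis:
  assumes "finite B" "\<And>x. x = (\<Sum>u\<in>B. hinner u x *s u)"
  shows "trace M = (\<Sum>u\<in>B. hinner u (M *v (u::'a::rclike^'n)))"
proof -
  have "M$j$j = (\<Sum>u\<in>B. conjugate (u$j) * (M *v u)$j)" for j
  proof -
    have "hinner u (axis j 1) = conjugate (u$j)" for u :: "'a^'n"
      by (simp add: hinner_def axis_def if_distrib cong: if_cong)
    hence "axis j 1 = (\<Sum>u\<in>B. conjugate (u$j) *s u)"
      using assms(2)[of "axis j 1"] by (simp only:)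
    hence "M *v axis j 1 = (\<Sum>u\<in>B. conjugate (u$j) *s (M *v u))"
      by (simp add: linear_sum[OF matrix_vector_mul_linear] vector_scalar_commute)
    moreover have "(M *v axis j 1)$j = M$j$j"
      by (simp add: matrix_vector_mult_def axis_def if_distrib cong: if_cong)
    ultimately show ?thesis
      by (simp add: sum_component)
  qed
  hence "trace M = (\<Sum>j\<in>UNIV. \<Sum>u\<in>B. conjugate (u$j) * (M *v u)$j)"
    by (simp add: trace_def)
  also have "\<dots> = (\<Sum>u\<in>B. hinner u (M *v u))"
    unfolding hinner_def by (rule sum.swap)
  finally show ?thesis .
qed

lemma outer_product_density_matrix:
  fixes x :: "'a::rclike^'n"
  assumes "norm x = 1"
  defines "X \<equiv> \<chi> i j. x$i * conjugate (x$j)"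
  shows "hermitian X" "psd X" "trace X = 1"
    and "\<And>A. hermitian A \<Longrightarrow> trace (mat_adjoint A ** X) = hinner x (A *v x)"
proof -
  show "hermitian X"
    unfolding hermitian_def mat_adjoint_def X_def by (simp add: vec_eq_iff mult.commute)
  moreover have "hinner y (X *v y) = of_real ((norm (hinner x y))\<^sup>2)" for y
  proof -
    have "X *v y = hinner x y *s x"
      by (simp add: X_def vec_eq_iff matrix_vector_mult_def hinner_def sum_distrib_left
          algebra_simps)
    hence "hinner y (X *v y) = conjugate (hinner x y) * hinner x y"
      by (simp add: hinner_scale_right conjugate_hinner mult.commute)
    thus ?thesis
      by (simp add: conjugate_mult_self)
  qed
  ultimately show "psd X"
    by (simp add: psd_def del: of_real_power)
  have "trace X = hinner x x"
    by (simp add: trace_def X_def hinner_def mult.commute)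
  thus "trace X = 1"
    using assms(1) by (simp add: hinner_self)
  fix A :: "'a^'n^'n"
  assume "hermitian A"
  hence "trace (mat_adjoint A ** X) = trace (A ** X)"
    by (simp add: hermitian_def)
  also have "\<dots> = (\<Sum>i\<in>UNIV. \<Sum>k\<in>UNIV. A$i$k * (x$k * conjugate (x$i)))"
    by (simp add: trace_def matrix_matrix_mult_def X_def)
  also have "\<dots> = hinner x (A *v x)"
    by (simp add: hinner_def matrix_vector_mult_def sum_distrib_left algebra_simps)
  finally show "trace (mat_adjoint A ** X) = hinner x (A *v x)" .
qed

lemma trace_adjoint_mult_in_common_eigenbasis:
  fixes A :: "nat \<Rightarrow> 'a::rclike^'n^'n"
  assumes herm: "\<forall>i<d. hermitian (A i)"
    and B: "finite B" "common_eigenbasis d A B" "\<And>x. x = (\<Sum>u\<in>B. hinner u x *s u)"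
    and "i < d"
  shows "trace (mat_adjoint (A i) ** X)
    = (\<Sum>u\<in>B. of_real (inner u (A i *v u)) * hinner u (X *v u))"
proof -
  have "trace (mat_adjoint (A i) ** X) = (\<Sum>u\<in>B. hinner u (A i *v (X *v u)))"
    using herm \<open>i < d\<close>
    by (simp add: hermitian_def trace_eq_sum_hinner_basis[OF B(1,3)] matrix_vector_mul_assoc)
  also have "\<dots> = (\<Sum>u\<in>B. hinner (A i *v u) (X *v u))"
    using herm \<open>i < d\<close> by (simp add: hermitian_hinner_swap)
  also have "\<dots> = (\<Sum>u\<in>B. of_real (inner u (A i *v u)) * hinner u (X *v u))"
  proof (intro sum.cong refl)
    fix u
    assume "u \<in> B"
    define l where "l = inner u (A i *v u)"
    have "A i *v u = l *\<^sub>R u"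
      using B(2) \<open>u \<in> B\<close> \<open>i < d\<close> by (simp add: common_eigenbasis_def l_def)
    thus "hinner (A i *v u) (X *v u) = of_real l * hinner u (X *v u)"
      by (simp add: hinner_scaleR_left)
  qed
  finally show ?thesis .
qed

lemma quadratic_form_in_common_eigenbasis:
  fixes A :: "nat \<Rightarrow> 'a::rclike^'n^'n" and c :: "'a^'n \<Rightarrow> 'a"
  assumes B: "finite B" "common_eigenbasis d A B" and "i < d"
  defines "x \<equiv> \<Sum>u\<in>B. c u *s u"
  shows "hinner x (A i *v x) = (\<Sum>u\<in>B. conjugate (c u) * c u * of_real (inner u (A i *v u)))"
proof -
  define l where "l u = inner u (A i *v u)" for u
  have "A i *v u = l u *\<^sub>R u" if "u \<in> B" for u
    using B(2) that \<open>i < d\<close> by (simp add: common_eigenbasis_def l_def)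
  hence "A i *v x = (\<Sum>u\<in>B. (c u * of_real (l u)) *s u)"
    unfolding x_def
    by (simp add: linear_sum[OF matrix_vector_mul_linear] vector_scalar_commute
        scaleR_eq_scale_of_real)
  moreover have "hinner_orthonormal B"
    using B(2) by (simp add: common_eigenbasis_def)
  ultimately show ?thesis
    unfolding x_def l_def by (simp add: hinner_orthonormal_expansion[OF B(1)] mult.assoc)
qed

text \<open>In a common eigenbasis \<open>(u)\<close> with eigenvalues \<open>\<lambda>\<^sub>i(u)\<close>, the weights
  \<open>p(u) = u\<^sup>\<dagger> X u\<close> form a probability vector and \<open>\<langle>A\<^sub>i, X\<rangle> = \<Sum>\<^sub>u \<lambda>\<^sub>i(u) p(u)\<close>;
  the unit vector \<open>x = \<Sum>\<^sub>u \<surd>p(u) u\<close> has the same quadratic forms.\<close>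

lemma density_matrix_to_unit_vector:
  fixes A :: "nat \<Rightarrow> 'a::rclike^'n^'n"
  assumes herm: "\<forall>i<d. hermitian (A i)"
    and comm: "\<forall>i<d. \<forall>j<d. A i ** A j = A j ** A i"
    and X: "psd X" "trace X = 1"
  obtains x where "norm x = 1"
    "\<forall>i<d. re (hinner x (A i *v x)) = re (trace (mat_adjoint (A i) ** X))"
proof -
  obtain B where B: "finite B" "common_eigenbasis d A B" "\<And>x. x = (\<Sum>u\<in>B. hinner u x *s u)"
    using common_eigenbasis_exists[OF herm comm] by blast
  define p where "p u = re (hinner u (X *v u))" for u
  have p_eq: "hinner u (X *v u) = of_real (p u)" for u
    unfolding p_def using X(1)
    by (intro conjugate_eq_self_imp_real hermitian_quadratic_form_real) (simp add: psd_def)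
  define x where "x = (\<Sum>u\<in>B. of_real (sqrt (p u)) *s u)"
  have sqrt_sq: "of_real (sqrt (p u)) * of_real (sqrt (p u)) = (of_real (p u) :: 'a)" for u
    using X(1) by (simp add: psd_def p_def flip: of_real_mult)
  have "(1::'a) = (\<Sum>u\<in>B. of_real (p u))"
    using X(2) by (simp add: trace_eq_sum_hinner_basis[OF B(1,3)] p_eq)
  also have "\<dots> = hinner x x"
    using B(1,2) unfolding x_def
    by (simp add: hinner_orthonormal_expansion common_eigenbasis_def sqrt_sq)
  finally have "(norm x)\<^sup>2 = 1"
    by (simp add: hinner_self del: of_real_power)
  hence "norm x = 1"
    using norm_ge_zero[of x] by (simp add: power2_eq_1_iff)
  moreover have "hinner x (A i *v x) = trace (mat_adjoint (A i) ** X)" if "i < d" for i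
    unfolding x_def quadratic_form_in_common_eigenbasis[OF B(1,2) that]
      trace_adjoint_mult_in_common_eigenbasis[OF herm B that]
    by (simp add: sqrt_sq p_eq mult.commute)
  ultimately show ?thesis
    using that by auto
qed

lemma quadratic_values_eq_sdp_values:
  fixes A :: "nat \<Rightarrow> 'a::rclike^'n^'n"
  assumes herm: "\<forall>i<d. hermitian (A i)"
    and comm: "\<forall>i<d. \<forall>j<d. A i ** A j = A j ** A i"
  shows "{root d (\<Prod>i<d. re (hinner x (A i *v x))) | x. norm x = 1}
       = {root d (\<Prod>i<d. re (trace (mat_adjoint (A i) ** X))) | X.
            hermitian X \<and> psd X \<and> trace X = 1}"
proof (intro equalityI subsetI)
  fix v
  assume "v \<in> {root d (\<Prod>i<d. re (hinner x (A i *v x))) | x. norm x = 1}"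
  then obtain x where x: "norm x = 1" and v: "v = root d (\<Prod>i<d. re (hinner x (A i *v x)))"
    by blast
  note X = outer_product_density_matrix[OF x]
  have "v = root d (\<Prod>i<d. re (trace (mat_adjoint (A i) ** (\<chi> i j. x$i * conjugate (x$j)))))"
    unfolding v using herm X(4) by simp
  with X(1-3) show "v \<in> {root d (\<Prod>i<d. re (trace (mat_adjoint (A i) ** X))) | X.
      hermitian X \<and> psd X \<and> trace X = 1}"
    by blast
next
  fix v
  assume "v \<in> {root d (\<Prod>i<d. re (trace (mat_adjoint (A i) ** X))) | X.
      hermitian X \<and> psd X \<and> trace X = 1}"
  then obtain X where X: "psd X" "trace X = 1"
    and v: "v = root d (\<Prod>i<d. re (trace (mat_adjoint (A i) ** X)))"
    by blast
  obtain x where x: "norm x = 1"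
    and same: "\<forall>i<d. re (hinner x (A i *v x)) = re (trace (mat_adjoint (A i) ** X))"
    using density_matrix_to_unit_vector[OF herm comm X] by blast
  have "v = root d (\<Prod>i<d. re (hinner x (A i *v x)))"
    unfolding v using same by simp
  with x show "v \<in> {root d (\<Prod>i<d. re (hinner x (A i *v x))) | x. norm x = 1}"
    by blast
qed

section \<open>The real and the complex instance\<close>

lemma rinner_eq_hinner: "rinner x y = hinner x y"
  by (simp add: rinner_def hinner_def)

lemma transpose_eq_mat_adjoint: "transpose (A::real^'n^'m) = mat_adjoint A"
  by (simp add: transpose_def mat_adjoint_def)

lemma rsym_iff_hermitian: "rsym A \<longleftrightarrow> hermitian A"
  by (simp add: rsym_def hermitian_def transpose_eq_mat_adjoint)

lemma rpsd_iff_psd: "rpsd A \<longleftrightarrow> psd A"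
  by (simp add: rpsd_def psd_def rsym_iff_hermitian rinner_eq_hinner)

lemma rtrace_eq_trace: "rtrace X = trace X"
  by (simp add: rtrace_def trace_def)

lemma rmat_inner_eq_trace: "rmat_inner A X = trace (mat_adjoint A ** X)"
  by (simp add: rmat_inner_def rtrace_eq_trace transpose_eq_mat_adjoint)

lemma cinner_vec_eq_hinner: "cinner_vec x y = hinner x y"
  by (simp add: cinner_vec_def hinner_def)

lemma cadj_eq_mat_adjoint: "cadj A = mat_adjoint A"
  by (simp add: cadj_def mat_adjoint_def)

lemma cherm_iff_hermitian: "cherm A \<longleftrightarrow> hermitian A"
  by (simp add: cherm_def hermitian_def cadj_eq_mat_adjoint)

lemma cpsd_iff_psd: "cpsd A \<longleftrightarrow> psd A"
proof -
  have "hermitian A \<Longrightarrow> Im (hinner x (A *v x)) = 0" for x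
    using hermitian_quadratic_form_real[of A x] by (simp add: complex_eq_iff)
  thus ?thesis
    by (auto simp: cpsd_def psd_def cherm_iff_hermitian cinner_vec_eq_hinner)
qed

lemma ctrace_eq_trace: "ctrace X = trace X"
  by (simp add: ctrace_def trace_def)

lemma cmat_inner_eq_trace: "cmat_inner A X = trace (mat_adjoint A ** X)"
  by (simp add: cmat_inner_def ctrace_eq_trace cadj_eq_mat_adjoint)

theorem mainTheorem7:
  fixes d :: nat
  shows "(\<forall>A :: nat \<Rightarrow> real^'n^'n.
            (\<forall>i<d. rpsd (A i)) \<and> (\<forall>i<d. \<forall>j<d. A i ** A j = A j ** A i)
            \<longrightarrow> Opt_r d A = OptSDP_r d A)
       \<and> (\<forall>A :: nat \<Rightarrow> complex^'n^'n.
            (\<forall>i<d. cpsd (A i)) \<and> (\<forall>i<d. \<forall>j<d. A i ** A j = A j ** A i)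
            \<longrightarrow> Opt_c d A = OptSDP_c d A)"
proof (intro conjI allI impI)
  fix A :: "nat \<Rightarrow> real^'n^'n"
  assume "(\<forall>i<d. rpsd (A i)) \<and> (\<forall>i<d. \<forall>j<d. A i ** A j = A j ** A i)"
  hence "\<forall>i<d. hermitian (A i)" "\<forall>i<d. \<forall>j<d. A i ** A j = A j ** A i"
    by (simp_all add: rpsd_iff_psd psd_def)
  from quadratic_values_eq_sdp_values[OF this] show "Opt_r d A = OptSDP_r d A"
    unfolding Opt_r_def OptSDP_r_def
    by (simp add: rinner_eq_hinner rmat_inner_eq_trace rsym_iff_hermitian rpsd_iff_psd
        rtrace_eq_trace)
next
  fix A :: "nat \<Rightarrow> complex^'n^'n"
  assume "(\<forall>i<d. cpsd (A i)) \<and> (\<forall>i<d. \<forall>j<d. A i ** A j = A j ** A i)"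
  hence "\<forall>i<d. hermitian (A i)" "\<forall>i<d. \<forall>j<d. A i ** A j = A j ** A i"
    by (simp_all add: cpsd_iff_psd psd_def)
  from quadratic_values_eq_sdp_values[OF this] show "Opt_c d A = OptSDP_c d A"
    unfolding Opt_c_def OptSDP_c_def
    by (simp add: cinner_vec_eq_hinner cmat_inner_eq_trace cherm_iff_hermitian cpsd_iff_psd
        ctrace_eq_trace)
qed

end
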